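(* Let $\mathcal{W}=\{W_1,\dots,W_N\}$ be a finite set of $d\times k$ real matrices and let $\mathcal{V}$ be a linear subspace of $\mathbb{S}^d$. Consider the semidefinite program in the variables $X\in\mathbb{S}^d$, $X_i,T_i\in\mathbb{S}^k$ ($i=1,\dots,N$): $$\text{maximize }\sum_{i=1}^N\operatorname{trace}T_i\ \text{ subject to } X\in\mathcal{V},\ X=\sum_{i=1}^NW_iX_iW_i^T,\ X_i\succeq T_i,\ I\succeq T_i\succeq 0\ (i=1,\dots,N).$$ If $(X,X_1,\dots,X_N,T_1,\dots,T_N)$ is any optimal solution of this program, then $\sum_{i=1}^N\operatorname{rank}X_i\ge\sum_{i=1}^N\operatorname{rank}X_i'$ for all $X_1',\dots,X_N'\in\mathbb{S}^k_+$ with $\sum_{i=1}^NW_iX_i'W_i^T\in\mathcal{V}$; that is, $X$ is obtained from a representation maximizing $\sum_i\operatorname{rank}X_i$ over $\mathcal{V}\cap\mathcal{C}(\mathcal{W})^*$.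
   Context: $\mathbb{S}^d$ denotes real symmetric $d\times d$ matrices; $A\succeq B$ means $A-B$ is positive semidefinite; $\mathbb{S}^k_+$ is the positive semidefinite cone. $\mathcal{C}(\mathcal{W})^*=\{\sum_{i=1}^NW_iX_iW_i^T: X_i\in\mathbb{S}^k_+\}$. Note that the constraints force $X_i\succeq 0$. *)

theory Defs
  imports "HOL-Analysis.Analysis"
begin

definition sym_mat :: "real^'n^'n \<Rightarrow> bool" where
  "sym_mat A \<longleftrightarrow> transpose A = A"

definition psd :: "real^'n^'n \<Rightarrow> bool" where
  "psd A \<longleftrightarrow> sym_mat A \<and> (\<forall>x. 0 \<le> x \<bullet> (A *v x))"

definition loewner_ge :: "real^'n^'n \<Rightarrow> real^'n^'n \<Rightarrow> bool" where
  "loewner_ge A B \<longleftrightarrow> psd (A - B)"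

definition cong_sum :: "nat \<Rightarrow> (nat \<Rightarrow> real^'k^'d) \<Rightarrow> (nat \<Rightarrow> real^'k^'k) \<Rightarrow> real^'d^'d" where
  "cong_sum N W Xs = (\<Sum>i<N. W i ** Xs i ** transpose (W i))"

definition sdp_feasible ::
  "nat \<Rightarrow> (nat \<Rightarrow> real^'k^'d) \<Rightarrow> (real^'d^'d) set \<Rightarrow>
   real^'d^'d \<Rightarrow> (nat \<Rightarrow> real^'k^'k) \<Rightarrow> (nat \<Rightarrow> real^'k^'k) \<Rightarrow> bool" where
  "sdp_feasible N W V X Xs Ts \<longleftrightarrow>
     sym_mat X \<and> (\<forall>i<N. sym_mat (Xs i) \<and> sym_mat (Ts i)) \<and>
     X \<in> V \<and> X = cong_sum N W Xs \<and>
     (\<forall>i<N. loewner_ge (Xs i) (Ts i) \<and> loewner_ge (mat 1) (Ts i) \<and> loewner_ge (Ts i) 0)"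

definition sdp_objective :: "nat \<Rightarrow> (nat \<Rightarrow> real^'k^'k) \<Rightarrow> real" where
  "sdp_objective N Ts = (\<Sum>i<N. trace (Ts i))"

definition sdp_optimal ::
  "nat \<Rightarrow> (nat \<Rightarrow> real^'k^'d) \<Rightarrow> (real^'d^'d) set \<Rightarrow>
   real^'d^'d \<Rightarrow> (nat \<Rightarrow> real^'k^'k) \<Rightarrow> (nat \<Rightarrow> real^'k^'k) \<Rightarrow> bool" where
  "sdp_optimal N W V X Xs Ts \<longleftrightarrow>
     sdp_feasible N W V X Xs Ts \<and>
     (\<forall>X' Xs' Ts'. sdp_feasible N W V X' Xs' Ts' \<longrightarrow>
        sdp_objective N Ts' \<le> sdp_objective N Ts)"

end

theory Submission
  imports Defs
begin

text \<open>
  The optimal value is exactly the maximal total rank.  For a feasible point, \<open>T\<^sub>i\<close> vanishes on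
  the kernel of \<open>X\<^sub>i\<close> (as \<open>0 \<preceq> T\<^sub>i \<preceq> X\<^sub>i\<close>), so \<open>T\<^sub>i\<close> lives on the range of \<open>X\<^sub>i\<close>, and
  \<open>T\<^sub>i \<preceq> I\<close> gives \<open>trace T\<^sub>i \<le> rank X\<^sub>i\<close>.  Conversely, for any \<open>X\<^sub>i' \<succeq> 0\<close> with
  \<open>\<Sum> W\<^sub>i X\<^sub>i' W\<^sub>i\<^sup>T \<in> \<V>\<close>, let \<open>Q\<^sub>i\<close> be the orthogonal projection onto the range of \<open>X\<^sub>i'\<close>.  Since
  \<open>X\<^sub>i'\<close> is positive definite on its range, \<open>Q\<^sub>i \<preceq> t X\<^sub>i'\<close> for large \<open>t\<close>; as \<open>\<V>\<close> is a subspace,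
  \<open>(t X\<^sub>i', Q\<^sub>i)\<close> is feasible with objective \<open>\<Sum> rank X\<^sub>i'\<close>.
\<close>

lemma sym_mat_inner: "sym_mat A \<Longrightarrow> x \<bullet> (A *v y) = (A *v x) \<bullet> y"
  by (metis dot_lmul_matrix sym_mat_def transpose_matrix_vector inner_commute)

lemma sym_mat_diff: "sym_mat A \<Longrightarrow> sym_mat B \<Longrightarrow> sym_mat (A - B)"
  by (simp add: sym_mat_def transpose_def vec_eq_iff)

lemma sym_mat_add: "sym_mat A \<Longrightarrow> sym_mat B \<Longrightarrow> sym_mat (A + B)"
  by (simp add: sym_mat_def transpose_def vec_eq_iff)

lemma sym_mat_scaleR: "sym_mat A \<Longrightarrow> sym_mat (t *\<^sub>R A)"
  by (simp add: sym_mat_def transpose_scalar)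

lemma loewner_ge_quadratic_form: "loewner_ge A B \<Longrightarrow> x \<bullet> (B *v x) \<le> x \<bullet> (A *v x)"
  unfolding loewner_ge_def psd_def
  by (metis diff_ge_0_iff_ge inner_diff_right matrix_vector_mult_diff_rdistrib)

lemma psd_mult_vector_eq_0:
  assumes "psd T" and "z \<bullet> (T *v z) = 0"
  shows "T *v z = 0"
proof -
  have sym: "sym_mat T" and form: "\<And>x. 0 \<le> x \<bullet> (T *v x)" using assms(1) by (auto simp: psd_def)
  define y where "y = T *v z"
  define m where "m = y \<bullet> y"
  define c where "c = y \<bullet> (T *v y)"
  have "c \<ge> 0" using form c_def by auto
  define s where "s = m / (c + 1)"
  \<comment> \<open>the form along \<open>z - s y\<close> is \<open>-2 s m + s\<^sup>2 c\<close>, negative for \<open>m > 0\<close>\<close>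
  have "0 \<le> (z - s *\<^sub>R y) \<bullet> (T *v (z - s *\<^sub>R y))" by (rule form)
  also have "\<dots> = z \<bullet> (T *v z) - 2 * s * m + s\<^sup>2 * c"
    using sym_mat_inner[OF sym, of y z]
    by (simp add: matrix_vector_mult_diff_distrib matrix_vector_mult_scaleR inner_diff_left
        inner_diff_right algebra_simps power2_eq_square m_def c_def y_def inner_commute)
  finally have ineq: "0 \<le> - 2 * s * m + s\<^sup>2 * c" using assms(2) by simp
  have "m = 0"
  proof (rule ccontr)
    assume "m \<noteq> 0"
    then have "m > 0" by (simp add: m_def)
    then have "s > 0" and "s * c < m" using \<open>c \<ge> 0\<close> by (simp_all add: s_def field_simps)
    then have "s * (s * c) < s * (2 * m)" using \<open>m > 0\<close> by (intro mult_strict_left_mono) auto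
    then show False using ineq by (simp add: power2_eq_square algebra_simps)
  qed
  then show ?thesis by (simp add: m_def y_def)
qed

lemma loewner_ge_kernel:
  assumes "psd T" and "loewner_ge X T" and "X *v z = 0"
  shows "T *v z = 0"
proof (rule psd_mult_vector_eq_0[OF assms(1)])
  have "z \<bullet> (T *v z) \<le> z \<bullet> (X *v z)" using assms(2) by (rule loewner_ge_quadratic_form)
  moreover have "0 \<le> z \<bullet> (T *v z)" using assms(1) by (simp add: psd_def)
  ultimately show "z \<bullet> (T *v z) = 0" using assms(3) by simp
qed

lemma sym_mat_mult_vector_eq_0:
  assumes "sym_mat A" and "\<And>u. u \<in> range ((*v) A) \<Longrightarrow> u \<bullet> z = 0"
  shows "A *v z = 0"
proof -
  have "(A *v (A *v z)) \<bullet> z = 0" using assms(2) by blast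
  then have "(A *v z) \<bullet> (A *v z) = 0"
    using sym_mat_inner[OF assms(1), of "A *v z" z] by (simp add: inner_commute)
  then show ?thesis by simp
qed

lemma psd_quadratic_form_pos_on_range:
  assumes "psd P" and "y \<in> range ((*v) P)" and "y \<noteq> 0"
  shows "y \<bullet> (P *v y) > 0"
proof (rule ccontr)
  assume "\<not> y \<bullet> (P *v y) > 0"
  moreover have "0 \<le> y \<bullet> (P *v y)" using assms(1) by (simp add: psd_def)
  ultimately have "y \<bullet> (P *v y) = 0" by simp
  with assms(1) have "P *v y = 0" by (rule psd_mult_vector_eq_0)
  moreover obtain w where "y = P *v w" using assms(2) by auto
  ultimately have "y \<bullet> y = 0" using sym_mat_inner[of P y w] assms(1) by (simp add: psd_def)
  with assms(3) show False by simp
qed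

lemma psd_coercive_on_range:
  fixes P :: "real^'n^'n"
  assumes "psd P"
  obtains c where "c > 0" and "\<And>y. y \<in> range ((*v) P) \<Longrightarrow> c * (y \<bullet> y) \<le> y \<bullet> (P *v y)"
proof -
  define U where "U = range ((*v) P)"
  have U: "subspace U"
    unfolding U_def by (simp add: linear_subspace_image matrix_vector_mul_linear subspace_UNIV)
  define K where "K = U \<inter> sphere 0 1"
  have normalize: "(1 / norm y) *\<^sub>R y \<in> K" if "y \<in> U" "y \<noteq> 0" for y
    using that U by (simp add: K_def subspace_scale)
  show thesis
  proof (cases "K = {}")
    case True
    then have "U \<subseteq> {0}" using normalize by blast
    then show thesis by (intro that[of 1]) (auto simp: U_def)
  next
    case False
    have "compact K" unfolding K_def by (intro closed_Int_compact closed_subspace U compact_sphere)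
    moreover have "continuous_on K (\<lambda>y. y \<bullet> (P *v y))"
      by (intro continuous_intros linear_continuous_on matrix_vector_mul_bounded_linear)
    ultimately obtain y0 where y0: "y0 \<in> K" and min: "\<And>y. y \<in> K \<Longrightarrow> y0 \<bullet> (P *v y0) \<le> y \<bullet> (P *v y)"
      using continuous_attains_inf[OF _ False] by blast
    define c where "c = y0 \<bullet> (P *v y0)"
    have "y0 \<in> range ((*v) P)" and "y0 \<noteq> 0" using y0 by (auto simp: K_def U_def)
    then have "c > 0" unfolding c_def by (rule psd_quadratic_form_pos_on_range[OF assms])
    moreover have "c * (y \<bullet> y) \<le> y \<bullet> (P *v y)" if "y \<in> U" for y
    proof (cases "y = 0")
      case False
      define u where "u = (1 / norm y) *\<^sub>R y"
      have "c \<le> u \<bullet> (P *v u)" unfolding c_def u_def by (rule min[OF normalize[OF that False]])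
      also have "\<dots> = (y \<bullet> (P *v y)) / (norm y)\<^sup>2"
        by (simp add: u_def matrix_vector_mult_scaleR power2_eq_square)
      finally show ?thesis using False by (simp add: field_simps power2_norm_eq_inner)
    qed simp
    ultimately show thesis using that U_def by blast
  qed
qed

definition orthonormal_set :: "(real^'n) set \<Rightarrow> bool" where
  "orthonormal_set B \<longleftrightarrow> finite B \<and> pairwise orthogonal B \<and> (\<forall>b\<in>B. norm b = 1)"

lemma orthonormal_basis_range:
  fixes A :: "real^'n^'n"
  obtains B where "orthonormal_set B" and "span B = range ((*v) A)" and "card B = rank A"
proof -
  have "subspace (range ((*v) A))"
    by (simp add: linear_subspace_image matrix_vector_mul_linear subspace_UNIV)
  then obtain B where
    "B \<subseteq> range ((*v) A)" and orth: "pairwise orthogonal B" and unit: "\<And>b. b \<in> B \<Longrightarrow> norm b = 1"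
    and "independent B" and "card B = dim (range ((*v) A))" and "span B = range ((*v) A)"
    by (metis orthonormal_basis_subspace)
  moreover have "orthonormal_set B"
    using orth unit independent_imp_finite[OF \<open>independent B\<close>] by (simp add: orthonormal_set_def)
  ultimately show thesis using that by (simp add: rank_dim_range)
qed

lemma orthonormal_set_finite: "orthonormal_set B \<Longrightarrow> finite B"
  by (simp add: orthonormal_set_def)

text \<open>For an orthonormal set \<open>B\<close> this is \<open>\<Sum>\<^sub>b b b\<^sup>T\<close>, the orthogonal projection onto \<open>span B\<close>.\<close>
definition onb_proj :: "(real^'n) set \<Rightarrow> real^'n^'n" where
  "onb_proj B = (\<chi> i j. \<Sum>b\<in>B. b$i * b$j)"

lemma onb_proj_mult_vector:
  assumes "finite B"
  shows "onb_proj B *v x = (\<Sum>b\<in>B. (b \<bullet> x) *\<^sub>R b)"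
  unfolding vec_eq_iff
proof
  fix i
  have "(onb_proj B *v x) $ i = (\<Sum>j\<in>UNIV. \<Sum>b\<in>B. b$i * b$j * x$j)"
    by (simp add: onb_proj_def matrix_vector_mult_def sum_distrib_right)
  also have "\<dots> = (\<Sum>b\<in>B. \<Sum>j\<in>UNIV. b$i * b$j * x$j)" by (rule sum.swap)
  also have "\<dots> = (\<Sum>b\<in>B. (b \<bullet> x) * b$i)"
    by (simp add: inner_vec_def sum_distrib_left sum_distrib_right mult_ac)
  also have "\<dots> = (\<Sum>b\<in>B. (b \<bullet> x) *\<^sub>R b) $ i" by simp
  finally show "(onb_proj B *v x) $ i = (\<Sum>b\<in>B. (b \<bullet> x) *\<^sub>R b) $ i" .
qed

lemma sym_mat_onb_proj: "sym_mat (onb_proj B)"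
  by (simp add: sym_mat_def onb_proj_def transpose_def vec_eq_iff mult.commute)

lemma trace_onb_proj:
  assumes "orthonormal_set B"
  shows "trace (onb_proj B) = real (card B)"
proof -
  have "trace (onb_proj B) = (\<Sum>b\<in>B. b \<bullet> b)"
    unfolding trace_def onb_proj_def by (simp add: inner_vec_def sum.swap[of _ UNIV] power2_eq_square)
  also have "\<dots> = (\<Sum>b\<in>B. 1)"
    using assms by (intro sum.cong) (auto simp: orthonormal_set_def norm_eq_1)
  finally show ?thesis by simp
qed

lemma onb_proj_in_span: "finite B \<Longrightarrow> onb_proj B *v x \<in> span B"
  by (simp add: onb_proj_mult_vector span_sum span_scale span_base)

lemma onb_proj_residual_orthogonal:
  assumes "orthonormal_set B" and "u \<in> span B"
  shows "u \<bullet> (x - onb_proj B *v x) = 0"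
proof -
  have fin: "finite B" and orth: "pairwise orthogonal B" and unit: "\<And>b. b \<in> B \<Longrightarrow> b \<bullet> b = 1"
    using assms(1) by (auto simp: orthonormal_set_def norm_eq_1)
  have "b \<bullet> (x - onb_proj B *v x) = 0" if b: "b \<in> B" for b
  proof -
    have "b \<bullet> (onb_proj B *v x) = (\<Sum>c\<in>B. (c \<bullet> x) * (b \<bullet> c))"
      by (simp add: onb_proj_mult_vector[OF fin] inner_sum_right)
    also have "\<dots> = (b \<bullet> x) * (b \<bullet> b) + (\<Sum>c\<in>B-{b}. (c \<bullet> x) * (b \<bullet> c))"
      using fin b by (simp add: sum.remove)
    also have "(\<Sum>c\<in>B-{b}. (c \<bullet> x) * (b \<bullet> c)) = 0"
      using orth b by (intro sum.neutral) (auto simp: pairwise_def orthogonal_def)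
    also have "b \<bullet> b = 1" using unit[OF b] .
    finally show ?thesis by (simp add: inner_diff_right)
  qed
  then have "orthogonal (x - onb_proj B *v x) u"
    by (intro orthogonal_to_span[OF assms(2)]) (simp add: orthogonal_def inner_commute)
  then show ?thesis by (simp add: orthogonal_def inner_commute)
qed

lemma inner_onb_proj:
  assumes "orthonormal_set B"
  shows "x \<bullet> (onb_proj B *v x) = (onb_proj B *v x) \<bullet> (onb_proj B *v x)"
proof -
  have "(onb_proj B *v x) \<bullet> (x - onb_proj B *v x) = 0"
    using assms by (intro onb_proj_residual_orthogonal onb_proj_in_span orthonormal_set_finite)
  then show ?thesis by (simp add: inner_diff_right inner_commute)
qed

lemma psd_onb_proj: "orthonormal_set B \<Longrightarrow> psd (onb_proj B)"
  by (simp add: psd_def sym_mat_onb_proj inner_onb_proj)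

lemma onb_proj_le_id:
  fixes B :: "(real^'n) set"
  shows "orthonormal_set B \<Longrightarrow> loewner_ge (mat 1) (onb_proj B)"
  unfolding loewner_ge_def psd_def
proof (intro conjI allI)
  assume B: "orthonormal_set B"
  show "sym_mat (mat 1 - onb_proj B)" by (intro sym_mat_diff sym_mat_onb_proj) (simp add: sym_mat_def)
  fix x :: "real^'n"
  define y where "y = onb_proj B *v x"
  have "0 \<le> (x - y) \<bullet> (x - y)" by simp
  also have "\<dots> = x \<bullet> ((mat 1 - onb_proj B) *v x)"
    using inner_onb_proj[OF B, of x]
    by (simp add: y_def matrix_vector_mult_diff_rdistrib inner_diff_left inner_diff_right inner_commute)
  finally show "0 \<le> x \<bullet> ((mat 1 - onb_proj B) *v x)" .
qed

lemma sym_mat_mult_onb_proj: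
  assumes "sym_mat A" and "orthonormal_set B" and "span B = range ((*v) A)"
  shows "A *v (onb_proj B *v x) = A *v x"
proof -
  have "A *v (x - onb_proj B *v x) = 0"
    using assms by (intro sym_mat_mult_vector_eq_0 onb_proj_residual_orthogonal) auto
  then show ?thesis by (simp add: matrix_vector_mult_diff_distrib)
qed

lemma trace_eq_sum_onb:
  assumes "finite B" and "\<And>x. T *v (onb_proj B *v x) = T *v x"
  shows "trace T = (\<Sum>b\<in>B. b \<bullet> (T *v b))"
proof -
  have "T = T ** onb_proj B"
    unfolding matrix_eq using assms(2) by (simp add: matrix_vector_mul_assoc)
  then have "trace T = trace (T ** onb_proj B)" by simp
  also have "\<dots> = (\<Sum>i\<in>UNIV. \<Sum>j\<in>UNIV. \<Sum>b\<in>B. T$i$j * b$j * b$i)"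
    by (simp add: trace_def matrix_matrix_mult_def onb_proj_def sum_distrib_left mult_ac)
  also have "\<dots> = (\<Sum>i\<in>UNIV. \<Sum>b\<in>B. \<Sum>j\<in>UNIV. T$i$j * b$j * b$i)"
    by (intro sum.cong refl) (rule sum.swap)
  also have "\<dots> = (\<Sum>b\<in>B. \<Sum>i\<in>UNIV. \<Sum>j\<in>UNIV. T$i$j * b$j * b$i)"
    by (rule sum.swap)
  also have "\<dots> = (\<Sum>b\<in>B. b \<bullet> (T *v b))"
    by (simp add: inner_vec_def matrix_vector_mult_def sum_distrib_left sum_distrib_right mult_ac)
  finally show ?thesis .
qed

lemma trace_le_rank:
  fixes T X :: "real^'n^'n"
  assumes "psd T" and "loewner_ge (mat 1) T" and "loewner_ge X T"
  shows "trace T \<le> real (rank X)"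
proof -
  have "sym_mat X"
    using assms(1,3) sym_mat_add[of "X - T" T] by (simp add: loewner_ge_def psd_def)
  obtain B where B: "orthonormal_set B" and span: "span B = range ((*v) X)" and card: "card B = rank X"
    by (rule orthonormal_basis_range)
  have X_kernel: "X *v (x - onb_proj B *v x) = 0" for x
    using sym_mat_mult_onb_proj[OF \<open>sym_mat X\<close> B span] by (simp add: matrix_vector_mult_diff_distrib)
  have "T *v (onb_proj B *v x) = T *v x" for x
    using loewner_ge_kernel[OF assms(1,3) X_kernel] by (simp add: matrix_vector_mult_diff_distrib)
  then have "trace T = (\<Sum>b\<in>B. b \<bullet> (T *v b))"
    by (rule trace_eq_sum_onb[OF orthonormal_set_finite[OF B]])
  also have "\<dots> \<le> (\<Sum>b\<in>B. b \<bullet> (mat 1 *v b))"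
    by (rule sum_mono) (rule loewner_ge_quadratic_form[OF assms(2)])
  also have "\<dots> = real (card B)"
    using B by (simp add: orthonormal_set_def norm_eq_1)
  finally show ?thesis by (simp add: card)
qed

lemma onb_proj_le_scaled_psd:
  fixes P :: "real^'n^'n"
  assumes "psd P" and B: "orthonormal_set B" and span: "span B = range ((*v) P)"
    and "c > 0" and coercive: "\<And>y. y \<in> range ((*v) P) \<Longrightarrow> c * (y \<bullet> y) \<le> y \<bullet> (P *v y)"
    and "t \<ge> 1 / c"
  shows "loewner_ge (t *\<^sub>R P) (onb_proj B)"
  unfolding loewner_ge_def psd_def
proof (intro conjI allI)
  have P: "sym_mat P" using assms(1) by (simp add: psd_def)
  then show "sym_mat (t *\<^sub>R P - onb_proj B)" by (simp add: sym_mat_diff sym_mat_scaleR sym_mat_onb_proj)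
  fix x :: "real^'n"
  define y where "y = onb_proj B *v x"
  have "y \<in> range ((*v) P)"
    using onb_proj_in_span[OF orthonormal_set_finite[OF B], of x] span by (simp add: y_def)
  have "x \<bullet> (P *v x) = y \<bullet> (P *v y)"
    using sym_mat_mult_onb_proj[OF P B span] sym_mat_inner[OF P, of x y] by (simp add: y_def inner_commute)
  have "y \<bullet> y \<le> t * (c * (y \<bullet> y))"
    using mult_right_mono[of 1 "t * c" "y \<bullet> y"] \<open>t \<ge> 1 / c\<close> \<open>c > 0\<close> by (simp add: field_simps)
  also have "\<dots> \<le> t * (x \<bullet> (P *v x))"
    using coercive[OF \<open>y \<in> _\<close>] \<open>x \<bullet> (P *v x) = _\<close> \<open>t \<ge> 1 / c\<close> \<open>c > 0\<close>
    by (intro mult_left_mono) (auto intro: order.trans[rotated])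
  finally show "0 \<le> x \<bullet> ((t *\<^sub>R P - onb_proj B) *v x)"
    using inner_onb_proj[OF B, of x]
    by (simp add: y_def matrix_vector_mult_diff_rdistrib inner_diff_right scaleR_matrix_vector_assoc[symmetric])
qed

lemma range_projection_below_psd:
  fixes P :: "real^'n^'n"
  assumes "psd P"
  obtains t0 Q where "psd Q" and "loewner_ge (mat 1) Q" and "trace Q = real (rank P)"
    and "\<And>t. t \<ge> t0 \<Longrightarrow> loewner_ge (t *\<^sub>R P) Q"
proof -
  obtain c where "c > 0" and coercive: "\<And>y. y \<in> range ((*v) P) \<Longrightarrow> c * (y \<bullet> y) \<le> y \<bullet> (P *v y)"
    using psd_coercive_on_range[OF assms] by blast
  obtain B where B: "orthonormal_set B" and span: "span B = range ((*v) P)" and "card B = rank P"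
    by (rule orthonormal_basis_range)
  show thesis
  proof (rule that)
    show "psd (onb_proj B)" and "loewner_ge (mat 1) (onb_proj B)" and "trace (onb_proj B) = real (rank P)"
      using B \<open>card B = rank P\<close> by (simp_all add: psd_onb_proj onb_proj_le_id trace_onb_proj)
    show "loewner_ge (t *\<^sub>R P) (onb_proj B)" if "t \<ge> 1 / c" for t
      using assms B span \<open>c > 0\<close> coercive that by (rule onb_proj_le_scaled_psd)
  qed
qed

lemma sdp_objective_le_rank_sum:
  assumes "sdp_feasible N W V X Xs Ts"
  shows "sdp_objective N Ts \<le> (\<Sum>i<N. real (rank (Xs i)))"
  unfolding sdp_objective_def
proof (rule sum_mono)
  fix i assume "i \<in> {..<N}"
  with assms have "psd (Ts i)" and "loewner_ge (mat 1) (Ts i)" and "loewner_ge (Xs i) (Ts i)"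
    by (auto simp: sdp_feasible_def loewner_ge_def)
  then show "trace (Ts i) \<le> real (rank (Xs i))" by (rule trace_le_rank)
qed

lemma sdp_feasible_with_rank_objective:
  assumes "subspace V" and "\<forall>A\<in>V. sym_mat A"
    and psd: "\<forall>i<N. psd (Xs i)" and "cong_sum N W Xs \<in> V"
  obtains X' Xs' Ts' where "sdp_feasible N W V X' Xs' Ts'"
    and "sdp_objective N Ts' = (\<Sum>i<N. real (rank (Xs i)))"
proof -
  have "\<forall>i<N. \<exists>t0 Q. psd Q \<and> loewner_ge (mat 1) Q \<and> trace Q = real (rank (Xs i))
      \<and> (\<forall>t\<ge>t0. loewner_ge (t *\<^sub>R Xs i) Q)"
    using psd by (metis range_projection_below_psd)
  then obtain t0 Qs where Qs: "\<And>i. i < N \<Longrightarrow> psd (Qs i) \<and> loewner_ge (mat 1) (Qs i)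
      \<and> trace (Qs i) = real (rank (Xs i)) \<and> (\<forall>t\<ge>t0 i. loewner_ge (t *\<^sub>R Xs i) (Qs i))"
    by metis
  define t where "t = (\<Sum>i<N. \<bar>t0 i\<bar>)"
  have "t0 i \<le> t" if "i < N" for i
  proof -
    have "\<bar>t0 i\<bar> \<le> t" unfolding t_def using that by (intro member_le_sum) auto
    then show ?thesis by linarith
  qed
  define Xs' where "Xs' = (\<lambda>i. t *\<^sub>R Xs i)"
  have "cong_sum N W Xs' = t *\<^sub>R cong_sum N W Xs"
    by (simp add: cong_sum_def Xs'_def scaleR_sum_right matrix_scalar_ac scalar_matrix_assoc)
  then have "cong_sum N W Xs' \<in> V" using assms(1,4) by (simp add: subspace_scale)
  then have "sdp_feasible N W V (cong_sum N W Xs') Xs' Qs"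
    unfolding sdp_feasible_def using assms(2) psd Qs \<open>\<And>i. i < N \<Longrightarrow> t0 i \<le> t\<close>
    by (auto simp: Xs'_def psd_def loewner_ge_def intro: sym_mat_scaleR)
  moreover have "sdp_objective N Qs = (\<Sum>i<N. real (rank (Xs i)))"
    unfolding sdp_objective_def using Qs by simp
  ultimately show thesis by (rule that)
qed

theorem lemma7:
  fixes N :: nat and W :: "nat \<Rightarrow> real^'k^'d" and V :: "(real^'d^'d) set"
    and X :: "real^'d^'d" and Xs Ts :: "nat \<Rightarrow> real^'k^'k"
  assumes "subspace V"
    and "\<forall>A\<in>V. sym_mat A"
    and "sdp_optimal N W V X Xs Ts"
  shows "\<forall>Xs'. (\<forall>i<N. psd (Xs' i)) \<and> cong_sum N W Xs' \<in> V \<longrightarrow>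
           (\<Sum>i<N. rank (Xs' i)) \<le> (\<Sum>i<N. rank (Xs i))"
proof (intro allI impI, elim conjE)
  fix Xs' :: "nat \<Rightarrow> real^'k^'k"
  assume "\<forall>i<N. psd (Xs' i)" and "cong_sum N W Xs' \<in> V"
  with assms(1,2) obtain X'' Xs'' Ts'' where feasible: "sdp_feasible N W V X'' Xs'' Ts''"
    and rank_objective: "sdp_objective N Ts'' = (\<Sum>i<N. real (rank (Xs' i)))"
    by (rule sdp_feasible_with_rank_objective)
  have "(\<Sum>i<N. real (rank (Xs' i))) \<le> sdp_objective N Ts"
    using assms(3) feasible by (simp add: sdp_optimal_def flip: rank_objective)
  also have "\<dots> \<le> (\<Sum>i<N. real (rank (Xs i)))"
    using assms(3) by (auto simp: sdp_optimal_def intro: sdp_objective_le_rank_sum)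
  finally show "(\<Sum>i<N. rank (Xs' i)) \<le> (\<Sum>i<N. rank (Xs i))"
    by (simp flip: of_nat_sum)
qed

end
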